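(* Let $A$ be a complex $3$-dimensional binary associative superalgebra of type $(2,1)$. Then either $A$ is associative, or $A$ is isomorphic to $\mathbf{R}_{28}$ or to $\mathbf{R}_{30}$.
   Context: All algebras are over $\mathbb{C}$. A superalgebra is a $\mathbb{Z}_2$-graded algebra $A=A_0\oplus A_1$ with $A_iA_j\subseteq A_{i+j \bmod 2}$; $|x|\in\{0,1\}$ is the degree of a homogeneous $x$. It has type $(n,m)$ if $\dim A_0=n$, $\dim A_1=m$. Isomorphisms are grading-preserving algebra isomorphisms. The associator is $(x,y,z)=(xy)z-x(yz)$; a superalgebra is associative if $(x,y,z)=0$ for all $x,y,z$. A binary associative superalgebra is a superalgebra satisfying $(x,y,z)=-(-1)^{|y||z|}(x,z,y)=-(-1)^{|x||y|}(y,x,z)$ for all homogeneous $x,y,z$. Superalgebras of type $(2,1)$, in basis $e_1,e_2$ (even), $f_1$ (odd), listed by nonzero products (unlisted products are zero): $\mathbf{R}_{28}$: $e_1e_1=e_1,\ e_2e_1=e_2,\ e_1f_1=f_1,\ f_1f_1=e_2$; $\mathbf{R}_{30}$: $e_1e_1=e_1,\ e_1e_2=e_2,\ f_1e_1=f_1,\ f_1f_1=e_2$. *)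

theory Defs
  imports Complex_Main
begin

text \<open>A superalgebra of type (2,1) over the complex numbers, presented in a homogeneous
basis: basis index 0 = e1, 1 = e2 (even), 2 = f1 (odd).  Elements are coordinate
vectors nat => complex whose coordinates outside {0,1,2} vanish; the algebra is given by
structure constants c i j k (the coefficient of basis vector k in the product of basis
vectors i and j).\<close>

type_synonym vec3 = "nat \<Rightarrow> complex"
type_synonym sconst = "nat \<Rightarrow> nat \<Rightarrow> nat \<Rightarrow> complex"

definition is_vec :: "vec3 \<Rightarrow> bool" where
  "is_vec x \<longleftrightarrow> (\<forall>k\<ge>3. x k = 0)"

definition bdeg :: "nat \<Rightarrow> nat" where
  "bdeg i = (if i = 2 then 1 else 0)"

definition smul :: "sconst \<Rightarrow> vec3 \<Rightarrow> vec3 \<Rightarrow> vec3" where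
  "smul c x y = (\<lambda>k. if k < 3 then (\<Sum>i<3. \<Sum>j<3. x i * y j * c i j k) else 0)"

definition is_superalg :: "sconst \<Rightarrow> bool" where
  "is_superalg c \<longleftrightarrow> (\<forall>i<3. \<forall>j<3. \<forall>k<3.
      bdeg k \<noteq> (bdeg i + bdeg j) mod 2 \<longrightarrow> c i j k = 0)"

definition homog :: "nat \<Rightarrow> vec3 \<Rightarrow> bool" where
  "homog d x \<longleftrightarrow> is_vec x \<and> d < 2 \<and> (\<forall>k<3. bdeg k \<noteq> d \<longrightarrow> x k = 0)"

definition assoc3 :: "sconst \<Rightarrow> vec3 \<Rightarrow> vec3 \<Rightarrow> vec3 \<Rightarrow> vec3" where
  "assoc3 c x y z = (\<lambda>k. smul c (smul c x y) z k - smul c x (smul c y z) k)"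

definition is_assoc :: "sconst \<Rightarrow> bool" where
  "is_assoc c \<longleftrightarrow> (\<forall>x y z. is_vec x \<and> is_vec y \<and> is_vec z \<longrightarrow> assoc3 c x y z = (\<lambda>_. 0))"

definition is_binary_assoc :: "sconst \<Rightarrow> bool" where
  "is_binary_assoc c \<longleftrightarrow> (\<forall>a b d x y z. homog a x \<and> homog b y \<and> homog d z \<longrightarrow>
      assoc3 c x y z = (\<lambda>k. - ((-1) ^ (b * d)) * assoc3 c x z y k) \<and>
      assoc3 c x y z = (\<lambda>k. - ((-1) ^ (a * b)) * assoc3 c y x z k))"

definition mat_app :: "(nat \<Rightarrow> nat \<Rightarrow> complex) \<Rightarrow> vec3 \<Rightarrow> vec3" where
  "mat_app P x = (\<lambda>k. if k < 3 then (\<Sum>i<3. P k i * x i) else 0)"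

definition mat_mult3 :: "(nat \<Rightarrow> nat \<Rightarrow> complex) \<Rightarrow> (nat \<Rightarrow> nat \<Rightarrow> complex) \<Rightarrow> nat \<Rightarrow> nat \<Rightarrow> complex" where
  "mat_mult3 P Q = (\<lambda>i j. \<Sum>l<3. P i l * Q l j)"

definition invertible3 :: "(nat \<Rightarrow> nat \<Rightarrow> complex) \<Rightarrow> bool" where
  "invertible3 P \<longleftrightarrow> (\<exists>Q. \<forall>i<3. \<forall>j<3.
      mat_mult3 P Q i j = (if i = j then 1 else 0) \<and> mat_mult3 Q P i j = (if i = j then 1 else 0))"

definition super_iso :: "sconst \<Rightarrow> sconst \<Rightarrow> bool" where
  "super_iso c c' \<longleftrightarrow> (\<exists>P. invertible3 P \<and>
      (\<forall>i<3. \<forall>k<3. bdeg i \<noteq> bdeg k \<longrightarrow> P k i = 0) \<and>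
      (\<forall>x y. is_vec x \<and> is_vec y \<longrightarrow> mat_app P (smul c x y) = smul c' (mat_app P x) (mat_app P y)))"

definition R28 :: sconst where
  "R28 i j k = (if (i,j,k) = (0,0,0) \<or> (i,j,k) = (1,0,1) \<or> (i,j,k) = (0,2,2) \<or> (i,j,k) = (2,2,1)
                then 1 else 0)"

definition R30 :: sconst where
  "R30 i j k = (if (i,j,k) = (0,0,0) \<or> (i,j,k) = (0,1,1) \<or> (i,j,k) = (2,0,2) \<or> (i,j,k) = (2,2,1)
                then 1 else 0)"

end

theory Submission
  imports Defs
begin

(* Write e f = beta(e) f, f e = gamma(e) f and f f = delta for even e and the odd basis vector f.
   Binary associativity makes the associator super-alternating.  On the even part this forces
   associativity; moreover beta and gamma are characters, e delta = gamma(e) delta and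
   delta e = beta(e) delta.  The associator then vanishes unless delta <> 0 and beta <> gamma.
   In that case both characters kill delta, so they are proportional, and proportional characters
   coincide unless one of them vanishes.  If gamma = 0, the even part multiplies as
   x y = beta(y) x, and x |-> (beta(x), mu(x)) with mu(delta) = 1 is an isomorphism onto R28;
   the case beta = 0 is the opposite algebra of this one and gives R30. *)

lemma sum_lessThan_3: "(\<Sum>i<(3::nat). f i) = f 0 + f 1 + f 2"
  by (simp add: eval_nat_numeral)

lemma less_2_cases: "(i::nat) < 2 \<longleftrightarrow> i = 0 \<or> i = 1"
  by auto

lemma less_3_cases: "(i::nat) < 3 \<longleftrightarrow> i = 0 \<or> i = 1 \<or> i = 2"
  by auto

lemma bdeg_less_2 [simp]: "i < 2 \<Longrightarrow> bdeg i = 0"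
  by (simp add: bdeg_def)

lemma bdeg_2 [simp]: "bdeg 2 = 1"
  by (simp add: bdeg_def)

definition assoc_coeff :: "sconst \<Rightarrow> nat \<Rightarrow> nat \<Rightarrow> nat \<Rightarrow> nat \<Rightarrow> complex" where
  "assoc_coeff c i j l k = (\<Sum>m<3. c i j m * c m l k - c j l m * c i m k)"

lemma assoc3_eq_sum:
  "k < 3 \<Longrightarrow> assoc3 c x y z k = (\<Sum>i<3. \<Sum>j<3. \<Sum>l<3. x i * y j * z l * assoc_coeff c i j l k)"
  unfolding assoc3_def smul_def assoc_coeff_def sum_lessThan_3
  by (simp add: algebra_simps)

lemma is_assocI:
  assumes "\<And>i j l k. i < 3 \<Longrightarrow> j < 3 \<Longrightarrow> l < 3 \<Longrightarrow> k < 3 \<Longrightarrow> assoc_coeff c i j l k = 0"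
  shows "is_assoc c"
  unfolding is_assoc_def
proof (intro allI impI ext)
  fix x y z k
  show "assoc3 c x y z k = 0"
  proof (cases "k < 3")
    case True
    then show ?thesis by (simp add: assoc3_eq_sum assms)
  next
    case False
    then show ?thesis by (simp add: assoc3_def smul_def)
  qed
qed

definition basis_vec :: "nat \<Rightarrow> vec3" where
  "basis_vec i = (\<lambda>k. if k = i then 1 else 0)"

lemma assoc3_basis_vec:
  "\<lbrakk>i < 3; j < 3; l < 3; k < 3\<rbrakk> \<Longrightarrow>
    assoc3 c (basis_vec i) (basis_vec j) (basis_vec l) k = assoc_coeff c i j l k"
  by (simp add: assoc3_eq_sum sum_lessThan_3 basis_vec_def less_3_cases) (auto simp: eval_nat_numeral)

lemma homog_basis_vec: "i < 3 \<Longrightarrow> homog (bdeg i) (basis_vec i)"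
  unfolding homog_def is_vec_def basis_vec_def bdeg_def by auto

lemma assoc_coeff_swap23:
  assumes "is_binary_assoc c" "i < 3" "j < 3" "l < 3" "k < 3"
  shows "assoc_coeff c i j l k = - ((-1) ^ (bdeg j * bdeg l)) * assoc_coeff c i l j k"
proof -
  have "assoc3 c (basis_vec i) (basis_vec j) (basis_vec l) =
      (\<lambda>k. - ((-1) ^ (bdeg j * bdeg l)) * assoc3 c (basis_vec i) (basis_vec l) (basis_vec j) k)"
    using assms(1-4) homog_basis_vec unfolding is_binary_assoc_def by blast
  from fun_cong[OF this, of k] show ?thesis
    using assms by (simp add: assoc3_basis_vec)
qed

lemma assoc_coeff_swap12:
  assumes "is_binary_assoc c" "i < 3" "j < 3" "l < 3" "k < 3"
  shows "assoc_coeff c i j l k = - ((-1) ^ (bdeg i * bdeg j)) * assoc_coeff c j i l k"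
proof -
  have "assoc3 c (basis_vec i) (basis_vec j) (basis_vec l) =
      (\<lambda>k. - ((-1) ^ (bdeg i * bdeg j)) * assoc3 c (basis_vec j) (basis_vec i) (basis_vec l) k)"
    using assms(1-4) homog_basis_vec unfolding is_binary_assoc_def by blast
  from fun_cong[OF this, of k] show ?thesis
    using assms by (simp add: assoc3_basis_vec)
qed

lemma superalg_graded:
  "\<lbrakk>is_superalg c; i < 3; j < 3; k < 3; bdeg k \<noteq> (bdeg i + bdeg j) mod 2\<rbrakk> \<Longrightarrow> c i j k = 0"
  unfolding is_superalg_def by blast

lemma superalg_zeros:
  assumes "is_superalg c" "i < 2" "j < 2"
  shows "c i j 2 = 0" "c i 2 j = 0" "c 2 i j = 0" "c 2 2 2 = 0"
  using assms by (simp_all add: superalg_graded)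

lemma assoc_coeff_parity:
  assumes "is_superalg c" "i < 3" "j < 3" "l < 3" "k < 3"
    and "bdeg k \<noteq> (bdeg i + bdeg j + bdeg l) mod 2"
  shows "assoc_coeff c i j l k = 0"
proof -
  note graded = superalg_graded[OF assms(1)]
  have "c i j m * c m l k - c j l m * c i m k = 0" if "m < 3" for m
  proof -
    have "c i j m * c m l k = 0"
      using graded[of i j m] graded[of m l k] assms(2-6) that
      by (cases "bdeg m = (bdeg i + bdeg j) mod 2") (auto simp: mod_add_left_eq)
    moreover have "c j l m * c i m k = 0"
      using graded[of j l m] graded[of i m k] assms(2-6) that
      by (cases "bdeg m = (bdeg j + bdeg l) mod 2") (auto simp: mod_add_right_eq add.assoc)
    ultimately show ?thesis by auto
  qed
  then show ?thesis
    unfolding assoc_coeff_def by (intro sum.neutral) blast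
qed

lemma assoc_coeff_even:
  assumes "is_binary_assoc c" "i < 2" "j < 2" "l < 2" "k < 3"
  shows "assoc_coeff c i j l k = 0"
proof -
  have swap23: "assoc_coeff c p q r k = - assoc_coeff c p r q k" if "p < 2" "q < 2" "r < 2" for p q r
    using assoc_coeff_swap23[OF assms(1), of p q r k] that assms(5) by simp
  have swap12: "assoc_coeff c p q r k = - assoc_coeff c q p r k" if "p < 2" "q < 2" "r < 2" for p q r
    using assoc_coeff_swap12[OF assms(1), of p q r k] that assms(5) by simp
  consider "j = l" | "i = j" | "i = l"
    using assms(2-4) by linarith
  then show ?thesis
  proof cases
    case 1
    then show ?thesis using swap23[OF assms(2-4)] by simp
  next
    case 2
    then show ?thesis using swap12[OF assms(2-4)] by simp
  next
    case 3
    then show ?thesis using swap12[OF assms(2-4)] swap23[of j i i] assms(2,3) by simp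
  qed
qed

lemma assoc_coeff_one_odd:
  assumes "is_superalg c" "is_binary_assoc c" "i < 2" "j < 2"
  shows "assoc_coeff c i 2 j 2 = 0" "assoc_coeff c i j 2 2 = 0" "assoc_coeff c 2 i j 2 = 0"
proof -
  show middle: "assoc_coeff c i 2 j 2 = 0"
    using superalg_zeros[OF assms(1)] assms(3,4) by (simp add: assoc_coeff_def sum_lessThan_3)
  show "assoc_coeff c i j 2 2 = 0"
    using assoc_coeff_swap23[OF assms(2), of i j 2 2] middle assms(3,4) by simp
  show "assoc_coeff c 2 i j 2 = 0"
    using assoc_coeff_swap12[OF assms(2), of 2 i j 2] middle assms(3,4) by simp
qed

lemma assoc_coeff_two_odd:
  assumes "is_binary_assoc c" "i < 2" "k < 3"
  shows "assoc_coeff c i 2 2 k = - assoc_coeff c 2 i 2 k"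
    and "assoc_coeff c 2 2 i k = - assoc_coeff c 2 i 2 k"
  using assoc_coeff_swap12[OF assms(1), of i 2 2 k] assoc_coeff_swap23[OF assms(1), of 2 2 i k] assms(2,3)
  by simp_all

lemma assoc_coeff_odd_even_odd:
  assumes "is_superalg c" "i < 2" "k < 2"
  shows "assoc_coeff c 2 i 2 k = (c 2 i 2 - c i 2 2) * c 2 2 k"
  using superalg_zeros[OF assms(1)] assms(2,3)
  by (simp add: assoc_coeff_def sum_lessThan_3 algebra_simps)

lemma assoc_coeff_odd_odd_odd:
  assumes "is_superalg c"
  shows "assoc_coeff c 2 2 2 2 = (c 0 2 2 - c 2 0 2) * c 2 2 0 + (c 1 2 2 - c 2 1 2) * c 2 2 1"
  using superalg_zeros(4)[OF assms(1)] by (simp add: assoc_coeff_def sum_lessThan_3 algebra_simps)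

lemma is_assoc_if_odd_square_trivial:
  assumes superalg: "is_superalg c" and binary: "is_binary_assoc c"
    and trivial: "(c 2 2 0 = 0 \<and> c 2 2 1 = 0) \<or> (c 0 2 2 = c 2 0 2 \<and> c 1 2 2 = c 2 1 2)"
  shows "is_assoc c"
proof (rule is_assocI)
  have odd_even_odd: "assoc_coeff c 2 i 2 k = 0" if "i < 2" "k < 2" for i k
    using trivial that by (auto simp: assoc_coeff_odd_even_odd[OF superalg] less_2_cases)
  have two_odd: "assoc_coeff c i 2 2 k = 0" "assoc_coeff c 2 2 i k = 0" if "i < 2" "k < 2" for i k
    using odd_even_odd[OF that] assoc_coeff_two_odd[OF binary, of i k] that by simp_all
  have odd_odd_odd: "assoc_coeff c 2 2 2 2 = 0"
    using trivial by (auto simp: assoc_coeff_odd_odd_odd[OF superalg])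
  fix i j l k :: nat
  assume "i < 3" "j < 3" "l < 3" "k < 3"
  \<comment> \<open>by super-antisymmetry, each coefficient of the right parity is one of the above up to sign\<close>
  then show "assoc_coeff c i j l k = 0"
    unfolding less_3_cases
    by (elim disjE; simp add: odd_even_odd two_odd odd_odd_odd assoc_coeff_parity[OF superalg]
        assoc_coeff_even[OF binary] assoc_coeff_one_odd[OF superalg binary])
qed

lemma proportional_cases:
  fixes \<beta> \<gamma> :: "nat \<Rightarrow> complex"
  assumes "\<beta> 0 * \<gamma> 1 = \<beta> 1 * \<gamma> 0"
    and "\<beta> 0 * \<gamma> 0 * (\<beta> 0 - \<gamma> 0) = 0" "\<beta> 1 * \<gamma> 1 * (\<beta> 1 - \<gamma> 1) = 0"
  shows "(\<beta> 0 = 0 \<and> \<beta> 1 = 0) \<or> (\<gamma> 0 = 0 \<and> \<gamma> 1 = 0) \<or> (\<beta> 0 = \<gamma> 0 \<and> \<beta> 1 = \<gamma> 1)"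
  using assms by auto

lemma kernel_parallel:
  fixes \<beta> z w :: "nat \<Rightarrow> complex"
  assumes "\<beta> 0 \<noteq> 0 \<or> \<beta> 1 \<noteq> 0" "\<beta> 0 * z 0 + \<beta> 1 * z 1 = 0" "\<beta> 0 * w 0 + \<beta> 1 * w 1 = 0"
  shows "z 0 * w 1 = z 1 * w 0"
proof -
  have "\<beta> 0 * (z 0 * w 1 - z 1 * w 0) = 0" "\<beta> 1 * (z 0 * w 1 - z 1 * w 0) = 0"
    using assms(2,3) by algebra+
  then show ?thesis
    using assms(1) by auto
qed

lemma dual_vector_exists:
  fixes x :: "nat \<Rightarrow> complex"
  assumes "x 0 \<noteq> 0 \<or> x 1 \<noteq> 0"
  obtains \<mu> :: "nat \<Rightarrow> complex" where "\<mu> 0 * x 0 + \<mu> 1 * x 1 = 1"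
proof (cases "x 0 = 0")
  case True
  show ?thesis
    by (rule that[of "\<lambda>i. if i = 0 then 0 else 1 / x 1"]) (use True assms in simp)
next
  case False
  show ?thesis
    by (rule that[of "\<lambda>i. if i = 0 then 1 / x 0 else 0"]) (use False in simp)
qed

(* a is the multiplication of the even part on the basis e0, e1; for the odd basis vector f,
   e_i f = beta_i f, f e_i = gamma_i f and f f = delta_0 e0 + delta_1 e1. *)
locale binary_assoc_identities =
  fixes a :: "nat \<Rightarrow> nat \<Rightarrow> nat \<Rightarrow> complex" and \<beta> \<gamma> \<delta> :: "nat \<Rightarrow> complex"
  assumes even_assoc: "\<lbrakk>i < 2; j < 2; l < 2; k < 2\<rbrakk> \<Longrightarrow>
      a i j 0 * a 0 l k + a i j 1 * a 1 l k = a j l 0 * a i 0 k + a j l 1 * a i 1 k"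
    and mult_\<beta>: "\<lbrakk>i < 2; j < 2\<rbrakk> \<Longrightarrow> a i j 0 * \<beta> 0 + a i j 1 * \<beta> 1 = \<beta> i * \<beta> j"
    and mult_\<gamma>: "\<lbrakk>i < 2; j < 2\<rbrakk> \<Longrightarrow> a i j 0 * \<gamma> 0 + a i j 1 * \<gamma> 1 = \<gamma> i * \<gamma> j"
    and left_mult_\<delta>: "\<lbrakk>i < 2; k < 2\<rbrakk> \<Longrightarrow> a i 0 k * \<delta> 0 + a i 1 k * \<delta> 1 = \<gamma> i * \<delta> k"
    and right_mult_\<delta>: "\<lbrakk>i < 2; k < 2\<rbrakk> \<Longrightarrow> \<delta> 0 * a 0 i k + \<delta> 1 * a 1 i k = \<beta> i * \<delta> k"

lemma binary_assoc_identities_opposite: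
  assumes "binary_assoc_identities a \<beta> \<gamma> \<delta>"
  shows "binary_assoc_identities (\<lambda>i j k. a j i k) \<gamma> \<beta> \<delta>"
proof -
  interpret binary_assoc_identities a \<beta> \<gamma> \<delta> by fact
  show ?thesis
  proof
    fix i j l k :: nat
    assume "i < 2" "j < 2" "l < 2" "k < 2"
    then show "a j i 0 * a l 0 k + a j i 1 * a l 1 k = a l j 0 * a 0 i k + a l j 1 * a 1 i k"
      using even_assoc[of l j i k] by (simp add: ac_simps)
  next
    fix i j :: nat
    assume "i < 2" "j < 2"
    then show "a j i 0 * \<gamma> 0 + a j i 1 * \<gamma> 1 = \<gamma> i * \<gamma> j"
      and "a j i 0 * \<beta> 0 + a j i 1 * \<beta> 1 = \<beta> i * \<beta> j"
      using mult_\<gamma>[of j i] mult_\<beta>[of j i] by (simp_all add: ac_simps)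
  next
    fix i k :: nat
    assume "i < 2" "k < 2"
    then show "a 0 i k * \<delta> 0 + a 1 i k * \<delta> 1 = \<beta> i * \<delta> k"
      and "\<delta> 0 * a i 0 k + \<delta> 1 * a i 1 k = \<gamma> i * \<delta> k"
      using right_mult_\<delta>[of i k] left_mult_\<delta>[of i k] by (simp_all add: ac_simps)
  qed
qed

definition opposite :: "sconst \<Rightarrow> sconst" where
  "opposite c i j k = c j i k"

lemma opposite_opposite [simp]: "opposite (opposite c) = c"
  by (simp add: opposite_def fun_eq_iff)

lemma opposite_R28: "opposite R28 = R30"
  by (auto simp: opposite_def R28_def R30_def fun_eq_iff)

lemma is_superalg_opposite: "is_superalg c \<Longrightarrow> is_superalg (opposite c)"
  unfolding is_superalg_def opposite_def by (simp add: add.commute)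

lemma smul_opposite: "smul (opposite c) x y = smul c y x"
  unfolding smul_def opposite_def sum_lessThan_3 by (simp add: fun_eq_iff algebra_simps)

lemma super_iso_opposite: "super_iso c c' \<Longrightarrow> super_iso (opposite c) (opposite c')"
  unfolding super_iso_def smul_opposite by blast

abbreviation binary_assoc_coeffs :: "sconst \<Rightarrow> bool" where
  "binary_assoc_coeffs c \<equiv> binary_assoc_identities c (\<lambda>i. c i 2 2) (\<lambda>i. c 2 i 2) (\<lambda>k. c 2 2 k)"

lemma binary_assoc_coeffsI:
  assumes superalg: "is_superalg c" and binary: "is_binary_assoc c"
  shows "binary_assoc_coeffs c"
proof
  fix i j l k :: nat
  assume "i < 2" "j < 2" "l < 2" "k < 2"
  then show "c i j 0 * c 0 l k + c i j 1 * c 1 l k = c j l 0 * c i 0 k + c j l 1 * c i 1 k"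
    using assoc_coeff_even[OF binary, of i j l k]
    by (simp add: assoc_coeff_def sum_lessThan_3 algebra_simps superalg_zeros[OF superalg])
next
  fix i j :: nat
  assume ij: "i < 2" "j < 2"
  then show "c i j 0 * c 0 2 2 + c i j 1 * c 1 2 2 = c i 2 2 * c j 2 2"
    using assoc_coeff_one_odd(2)[OF superalg binary ij]
    by (simp add: assoc_coeff_def sum_lessThan_3 algebra_simps superalg_zeros[OF superalg])
  show "c i j 0 * c 2 0 2 + c i j 1 * c 2 1 2 = c 2 i 2 * c 2 j 2"
    using assoc_coeff_one_odd(3)[OF superalg binary ij] ij
    by (simp add: assoc_coeff_def sum_lessThan_3 algebra_simps superalg_zeros[OF superalg])
next
  fix i k :: nat
  assume ik: "i < 2" "k < 2"
  then show "c i 0 k * c 2 2 0 + c i 1 k * c 2 2 1 = c 2 i 2 * c 2 2 k"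
    using assoc_coeff_two_odd(1)[OF binary, of i k] assoc_coeff_odd_even_odd[OF superalg ik]
    by (simp add: assoc_coeff_def sum_lessThan_3 algebra_simps superalg_zeros[OF superalg])
  show "c 2 2 0 * c 0 i k + c 2 2 1 * c 1 i k = c i 2 2 * c 2 2 k"
    using assoc_coeff_two_odd(2)[OF binary, of i k] assoc_coeff_odd_even_odd[OF superalg ik] ik
    by (simp add: assoc_coeff_def sum_lessThan_3 algebra_simps superalg_zeros[OF superalg])
qed

lemma binary_assoc_coeffs_opposite: "binary_assoc_coeffs c \<Longrightarrow> binary_assoc_coeffs (opposite c)"
  using binary_assoc_identities_opposite by (simp add: opposite_def[abs_def])

context binary_assoc_identities
begin

lemma character_difference_odd_square:
  assumes "i < 2"
  shows "(\<beta> i - \<gamma> i) * (\<beta> 0 * \<delta> 0 + \<beta> 1 * \<delta> 1) = 0"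
  using mult_\<beta>[OF assms, of 0] mult_\<beta>[OF assms, of 1] left_mult_\<delta>[OF assms, of 0] left_mult_\<delta>[OF assms, of 1]
  by simp algebra

lemma odd_square_in_kernels:
  assumes "\<beta> 0 \<noteq> \<gamma> 0 \<or> \<beta> 1 \<noteq> \<gamma> 1"
  shows "\<beta> 0 * \<delta> 0 + \<beta> 1 * \<delta> 1 = 0" "\<gamma> 0 * \<delta> 0 + \<gamma> 1 * \<delta> 1 = 0"
proof -
  interpret opposite: binary_assoc_identities "\<lambda>i j k. a j i k" \<gamma> \<beta> \<delta>
    by (rule binary_assoc_identities_opposite) (rule binary_assoc_identities_axioms)
  show "\<beta> 0 * \<delta> 0 + \<beta> 1 * \<delta> 1 = 0"
    using character_difference_odd_square[of 0] character_difference_odd_square[of 1] assms by auto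
  show "\<gamma> 0 * \<delta> 0 + \<gamma> 1 * \<delta> 1 = 0"
    using opposite.character_difference_odd_square[of 0] opposite.character_difference_odd_square[of 1] assms
    by auto
qed

lemma one_character_vanishes:
  assumes "\<delta> 0 \<noteq> 0 \<or> \<delta> 1 \<noteq> 0" and "\<beta> 0 \<noteq> \<gamma> 0 \<or> \<beta> 1 \<noteq> \<gamma> 1"
  shows "(\<beta> 0 = 0 \<and> \<beta> 1 = 0) \<or> (\<gamma> 0 = 0 \<and> \<gamma> 1 = 0)"
proof -
  have proportional: "\<beta> 0 * \<gamma> 1 = \<beta> 1 * \<gamma> 0"
    using kernel_parallel[of \<delta> \<beta> \<gamma>] odd_square_in_kernels[OF assms(2)] assms(1) by (simp add: ac_simps)
  have "\<beta> 0 * \<gamma> 0 * (\<beta> 0 - \<gamma> 0) = 0"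
    using mult_\<beta>[of 0 0] mult_\<gamma>[of 0 0] proportional by simp algebra
  moreover have "\<beta> 1 * \<gamma> 1 * (\<beta> 1 - \<gamma> 1) = 0"
    using mult_\<beta>[of 1 1] mult_\<gamma>[of 1 1] proportional by simp algebra
  ultimately show ?thesis
    using proportional_cases[OF proportional] assms(2) by blast
qed

lemma even_mult_eq_right_character:
  assumes \<gamma>: "\<gamma> 0 = 0" "\<gamma> 1 = 0" and \<beta>_\<delta>: "\<beta> 0 * \<delta> 0 + \<beta> 1 * \<delta> 1 = 0"
    and \<beta>_nonzero: "\<beta> 0 \<noteq> 0 \<or> \<beta> 1 \<noteq> 0" and \<delta>_nonzero: "\<delta> 0 \<noteq> 0 \<or> \<delta> 1 \<noteq> 0"
    and "i < 2" "j < 2" "k < 2"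
  shows "a i j k = (if i = k then \<beta> j else 0)"
proof -
  obtain m where m: "m < 2" "\<delta> m \<noteq> 0"
    using \<delta>_nonzero less_2_cases by blast
  (* ker beta is spanned by delta, so e_i e_j = beta_j e_i + t_ij delta; associativity of
     e_i e_j e_l then leaves beta_j t_il delta = 0. *)
  define t where "t i j = (a i j m - (if i = m then \<beta> j else 0)) / \<delta> m" for i j
  have rep: "a i j k = (if i = k then \<beta> j else 0) + t i j * \<delta> k" if "i < 2" "j < 2" "k < 2" for i j k
  proof -
    let ?z = "\<lambda>k. a i j k - (if i = k then \<beta> j else 0)"
    have "\<beta> 0 * ?z 0 + \<beta> 1 * ?z 1 = 0"
      using mult_\<beta>[OF that(1,2)] that(1) by (auto simp: less_2_cases algebra_simps)
    then have "?z 0 * \<delta> 1 = ?z 1 * \<delta> 0"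
      using kernel_parallel[of \<beta> ?z \<delta>] \<beta>_nonzero \<beta>_\<delta> by blast
    then have "?z k * \<delta> m = ?z m * \<delta> k"
      using that(3) m(1) by (auto simp: less_2_cases)
    then show ?thesis
      using m(2) by (simp add: t_def field_simps)
  qed
  have key: "\<beta> j * t i l * \<delta> k = 0" if "i < 2" "j < 2" "l < 2" "k < 2" for i j l k
  proof -
    have "a i j 0 * a 0 l k + a i j 1 * a 1 l k = a j l 0 * a i 0 k + a j l 1 * a i 1 k"
      "\<delta> 0 * a 0 l k + \<delta> 1 * a 1 l k = \<beta> l * \<delta> k" "a i 0 k * \<delta> 0 + a i 1 k * \<delta> 1 = \<gamma> i * \<delta> k"
      using even_assoc[OF that] right_mult_\<delta>[OF that(3,4)] left_mult_\<delta>[OF that(1,4)] by auto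
    moreover have "a i j 0 = (if i = 0 then \<beta> j else 0) + t i j * \<delta> 0"
      "a i j 1 = (if i = 1 then \<beta> j else 0) + t i j * \<delta> 1"
      "a 0 l k = (if 0 = k then \<beta> l else 0) + t 0 l * \<delta> k"
      "a 1 l k = (if 1 = k then \<beta> l else 0) + t 1 l * \<delta> k"
      "a j l 0 = (if j = 0 then \<beta> l else 0) + t j l * \<delta> 0"
      "a j l 1 = (if j = 1 then \<beta> l else 0) + t j l * \<delta> 1"
      "a i 0 k = (if i = k then \<beta> 0 else 0) + t i 0 * \<delta> k"
      "a i 1 k = (if i = k then \<beta> 1 else 0) + t i 1 * \<delta> k"
      using rep that by auto
    moreover have "(i = 0 \<or> i = 1) \<and> (j = 0 \<or> j = 1) \<and> (k = 0 \<or> k = 1)"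
      using that by auto
    ultimately show ?thesis
      using \<beta>_\<delta> \<gamma>
      by - (elim conjE disjE; hypsubst_thin; simp only: if_True if_False zero_neq_one one_neq_zero simp_thms; algebra)
  qed
  obtain p where p: "p < 2" "\<beta> p \<noteq> 0"
    using \<beta>_nonzero less_2_cases by blast
  have "t i j = 0"
    using key[of i p j m] assms(6,7) m p by simp
  then show ?thesis
    using rep assms(6-8) by simp
qed

end

lemma smul_hom_if_basis:
  assumes basis: "\<And>i j m. \<lbrakk>i < 3; j < 3; m < 3\<rbrakk> \<Longrightarrow>
      (\<Sum>k<3. P m k * c i j k) = (\<Sum>p<3. \<Sum>q<3. P p i * P q j * c' p q m)"
  shows "mat_app P (smul c x y) = smul c' (mat_app P x) (mat_app P y)"
proof
  fix m :: nat
  show "mat_app P (smul c x y) m = smul c' (mat_app P x) (mat_app P y) m"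
  proof (cases "m < 3")
    case True
    have "mat_app P (smul c x y) m = (\<Sum>k<3. P m k * (\<Sum>i<3. \<Sum>j<3. x i * y j * c i j k))"
      using True by (simp add: mat_app_def smul_def)
    also have "\<dots> = (\<Sum>i<3. \<Sum>j<3. x i * y j * (\<Sum>k<3. P m k * c i j k))"
      unfolding sum_lessThan_3 by (simp add: algebra_simps)
    also have "\<dots> = (\<Sum>i<3. \<Sum>j<3. x i * y j * (\<Sum>p<3. \<Sum>q<3. P p i * P q j * c' p q m))"
      using True by (simp add: basis)
    also have "\<dots> = smul c' (mat_app P x) (mat_app P y) m"
      using True unfolding mat_app_def smul_def sum_lessThan_3 by (simp add: algebra_simps)
    finally show ?thesis .
  qed (simp add: mat_app_def smul_def)
qed

definition even_odd_block :: "(nat \<Rightarrow> nat \<Rightarrow> complex) \<Rightarrow> nat \<Rightarrow> nat \<Rightarrow> complex" where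
  "even_odd_block B k i = (if k < 2 \<and> i < 2 then B k i else if k = 2 \<and> i = 2 then 1 else 0)"

lemma invertible3_even_odd_block:
  assumes "B 0 0 * B 1 1 - B 0 1 * B 1 0 \<noteq> 0"
  shows "invertible3 (even_odd_block B)"
proof -
  define d where "d = B 0 0 * B 1 1 - B 0 1 * B 1 0"
  have "d \<noteq> 0"
    using assms by (simp add: d_def)
  define A :: "nat \<Rightarrow> nat \<Rightarrow> complex" where
    "A k i = (if k = 0 \<and> i = 0 then B 1 1 else if k = 0 then - B 0 1 else if i = 0 then - B 1 0 else B 0 0) / d"
    for k i
  have "mat_mult3 (even_odd_block B) (even_odd_block A) i j = (if i = j then 1 else 0) \<and>
      mat_mult3 (even_odd_block A) (even_odd_block B) i j = (if i = j then 1 else 0)" if "i < 3" "j < 3" for i j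
    using that \<open>d \<noteq> 0\<close> unfolding less_3_cases
    by (elim disjE; simp add: mat_mult3_def sum_lessThan_3 even_odd_block_def A_def field_simps;
        simp add: d_def algebra_simps)
  then show ?thesis
    unfolding invertible3_def by blast
qed

lemma even_odd_block_graded: "\<forall>i<3. \<forall>k<3. bdeg i \<noteq> bdeg k \<longrightarrow> even_odd_block B k i = 0"
  by (auto simp: even_odd_block_def less_3_cases)

lemma super_iso_R28I:
  assumes superalg: "is_superalg c"
    and even: "\<And>i j k. \<lbrakk>i < 2; j < 2; k < 2\<rbrakk> \<Longrightarrow> c i j k = (if i = k then c j 2 2 else 0)"
    and odd_even: "c 2 0 2 = 0" "c 2 1 2 = 0"
    and \<beta>_\<delta>: "c 0 2 2 * c 2 2 0 + c 1 2 2 * c 2 2 1 = 0"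
    and \<beta>_nonzero: "c 0 2 2 \<noteq> 0 \<or> c 1 2 2 \<noteq> 0" and \<delta>_nonzero: "c 2 2 0 \<noteq> 0 \<or> c 2 2 1 \<noteq> 0"
  shows "super_iso c R28"
proof -
  obtain \<mu> :: "nat \<Rightarrow> complex" where \<mu>: "\<mu> 0 * c 2 2 0 + \<mu> 1 * c 2 2 1 = 1"
    using dual_vector_exists[of "c 2 2"] \<delta>_nonzero by blast
  define B where "B k i = (if k = 0 then c i 2 2 else \<mu> i)" for k i :: nat
  have "B 0 0 * B 1 1 - B 0 1 * B 1 0 \<noteq> 0"
  proof
    assume "B 0 0 * B 1 1 - B 0 1 * B 1 0 = 0"
    then have "c 0 2 2 = 0" "c 1 2 2 = 0"
      using \<mu> \<beta>_\<delta> unfolding B_def by simp_all algebra+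
    then show False
      using \<beta>_nonzero by simp
  qed
  then have "invertible3 (even_odd_block B)"
    by (rule invertible3_even_odd_block)
  moreover have "mat_app (even_odd_block B) (smul c x y) =
      smul R28 (mat_app (even_odd_block B) x) (mat_app (even_odd_block B) y)" for x y
  proof (rule smul_hom_if_basis)
    fix i j m :: nat
    assume "i < 3" "j < 3" "m < 3"
    then show "(\<Sum>k<3. even_odd_block B m k * c i j k) =
        (\<Sum>p<3. \<Sum>q<3. even_odd_block B p i * even_odd_block B q j * R28 p q m)"
      using odd_even \<beta>_\<delta> \<mu> superalg_zeros[OF superalg, of 0 0] superalg_zeros[OF superalg, of 0 1]
        superalg_zeros[OF superalg, of 1 0] superalg_zeros[OF superalg, of 1 1]
      unfolding less_3_cases
      by - (elim disjE; simp add: sum_lessThan_3 even_odd_block_def B_def R28_def even One_nat_def)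
  qed
  ultimately show ?thesis
    unfolding super_iso_def using even_odd_block_graded by blast
qed

lemma super_iso_R28_of_coeffs:
  assumes superalg: "is_superalg c" and coeffs: "binary_assoc_coeffs c"
    and odd_even: "c 2 0 2 = 0" "c 2 1 2 = 0"
    and \<beta>_nonzero: "c 0 2 2 \<noteq> 0 \<or> c 1 2 2 \<noteq> 0" and \<delta>_nonzero: "c 2 2 0 \<noteq> 0 \<or> c 2 2 1 \<noteq> 0"
  shows "super_iso c R28"
proof -
  interpret binary_assoc_identities c "\<lambda>i. c i 2 2" "\<lambda>i. c 2 i 2" "\<lambda>k. c 2 2 k"
    by (rule coeffs)
  have \<beta>_\<delta>: "c 0 2 2 * c 2 2 0 + c 1 2 2 * c 2 2 1 = 0"
    using odd_square_in_kernels(1) odd_even \<beta>_nonzero by auto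
  show ?thesis
    using even_mult_eq_right_character[OF odd_even \<beta>_\<delta> \<beta>_nonzero \<delta>_nonzero]
    by (intro super_iso_R28I[OF superalg _ odd_even \<beta>_\<delta> \<beta>_nonzero \<delta>_nonzero])
qed

theorem mainTheorem20:
  fixes c :: sconst
  assumes "is_superalg c" and "is_binary_assoc c"
  shows "is_assoc c \<or> super_iso c R28 \<or> super_iso c R30"
proof (cases "(c 2 2 0 = 0 \<and> c 2 2 1 = 0) \<or> (c 0 2 2 = c 2 0 2 \<and> c 1 2 2 = c 2 1 2)")
  case True
  then show ?thesis
    using is_assoc_if_odd_square_trivial[OF assms] by blast
next
  case False
  then have \<delta>_nonzero: "c 2 2 0 \<noteq> 0 \<or> c 2 2 1 \<noteq> 0"
    and \<beta>_ne_\<gamma>: "c 0 2 2 \<noteq> c 2 0 2 \<or> c 1 2 2 \<noteq> c 2 1 2"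
    by auto
  have coeffs: "binary_assoc_coeffs c"
    using assms by (rule binary_assoc_coeffsI)
  consider "c 0 2 2 = 0 \<and> c 1 2 2 = 0" | "c 2 0 2 = 0 \<and> c 2 1 2 = 0"
    using binary_assoc_identities.one_character_vanishes[OF coeffs \<delta>_nonzero \<beta>_ne_\<gamma>] by blast
  then show ?thesis
  proof cases
    case 1
    then have "super_iso (opposite c) R28"
      using super_iso_R28_of_coeffs[OF is_superalg_opposite[OF assms(1)] binary_assoc_coeffs_opposite[OF coeffs]]
        \<beta>_ne_\<gamma> \<delta>_nonzero
      by (auto simp: opposite_def)
    then show ?thesis
      using super_iso_opposite opposite_R28 by fastforce
  next
    case 2
    then show ?thesis
      using super_iso_R28_of_coeffs[OF assms(1) coeffs] \<beta>_ne_\<gamma> \<delta>_nonzero by auto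
  qed
qed

end
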